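(* Let $0<\alpha<\beta<1$, $\theta\in[0,1)$ and $w\in V^\perp(\theta)$. Then: (i) $w''=0$ on $Q_0=(\alpha,\beta)$; in particular $w(y)=(w(\beta)-w(\alpha))(\beta-\alpha)^{-1}(y-\alpha)+w(\alpha)$ for $y\in Q_0$; (ii) if $\theta\neq0$, then $(\beta-\alpha)^{-1}(w(\beta)-w(\alpha))=\bigl(1-e^{-2\pi i\theta}\bigr)^{-1}\bigl(\alpha+(1-\beta)e^{-2\pi i\theta}\bigr)\int_{Q_1}w(y)\,dy$; (iii) if $\theta=0$, then $\int_{Q_1}w(y)\,dy=0$.
   Context: $Q=(0,1)$, $Q_1=(0,\alpha)\cup(\beta,1)$. Let $p$ be a $1$-periodic measurable function with $p>0$, $p,p^{-1}\in L^\infty(0,1)$. For $\theta\in[0,1)$, $H^1_\theta(Q)=\{u\in H^1(0,1):u(1)=e^{2\pi i\theta}u(0)\}$ and $V(\theta)=\{v\in H^1_\theta(Q):p v'=0\text{ a.e. on }Q_1\}$. $V^\perp(\theta)$ is the orthogonal complement of $V(\theta)$ in $H^1_\theta(Q)$ with respect to the inner product $\langle u,v\rangle=\bigl(\int_{Q_1}u\bigr)\overline{\bigl(\int_{Q_1}v\bigr)}+\int_Qu'\overline{v'}$. *)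

theory Defs
  imports "HOL-Analysis.Analysis"
begin

definition Q1 :: "real \<Rightarrow> real \<Rightarrow> real set" where
  "Q1 \<alpha> \<beta> = {0<..<\<alpha>} \<union> {\<beta><..<1}"

text \<open>H^1(0,1): u (its continuous representative on [0,1]) together with a weak
  derivative u' in L^2(0,1), u(x) = u(0) + integral from 0 to x of u'.\<close>
definition H1 :: "(real \<Rightarrow> complex) \<Rightarrow> (real \<Rightarrow> complex) \<Rightarrow> bool" where
  "H1 u u' \<longleftrightarrow>
     set_borel_measurable lborel {0<..<1} u' \<and>
     set_integrable lborel {0<..<1} u' \<and>
     set_integrable lborel {0<..<1} (\<lambda>x. (cmod (u' x))^2) \<and>
     (\<forall>x\<in>{0..1}. u x = u 0 + (LINT t:{0..x}|lborel. u' t))"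

definition H1_theta :: "real \<Rightarrow> (real \<Rightarrow> complex) \<Rightarrow> (real \<Rightarrow> complex) \<Rightarrow> bool" where
  "H1_theta \<theta> u u' \<longleftrightarrow> H1 u u' \<and> u 1 = exp (\<i> * complex_of_real (2 * pi * \<theta>)) * u 0"

definition inV :: "(real \<Rightarrow> real) \<Rightarrow> real \<Rightarrow> real \<Rightarrow> real \<Rightarrow>
    (real \<Rightarrow> complex) \<Rightarrow> (real \<Rightarrow> complex) \<Rightarrow> bool" where
  "inV p \<alpha> \<beta> \<theta> v v' \<longleftrightarrow> H1_theta \<theta> v v' \<and>
     (AE x in lborel. x \<in> Q1 \<alpha> \<beta> \<longrightarrow> complex_of_real (p x) * v' x = 0)"

definition ip :: "real \<Rightarrow> real \<Rightarrow> (real \<Rightarrow> complex) \<Rightarrow> (real \<Rightarrow> complex) \<Rightarrow>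
    (real \<Rightarrow> complex) \<Rightarrow> (real \<Rightarrow> complex) \<Rightarrow> complex" where
  "ip \<alpha> \<beta> u u' v v' =
     (LINT y:Q1 \<alpha> \<beta>|lborel. u y) * cnj (LINT y:Q1 \<alpha> \<beta>|lborel. v y)
     + (LINT y:{0<..<1}|lborel. u' y * cnj (v' y))"

definition inVperp :: "(real \<Rightarrow> real) \<Rightarrow> real \<Rightarrow> real \<Rightarrow> real \<Rightarrow>
    (real \<Rightarrow> complex) \<Rightarrow> (real \<Rightarrow> complex) \<Rightarrow> bool" where
  "inVperp p \<alpha> \<beta> \<theta> w w' \<longleftrightarrow> H1_theta \<theta> w w' \<and>
     (\<forall>v v'. inV p \<alpha> \<beta> \<theta> v v' \<longrightarrow> ip \<alpha> \<beta> w w' v v' = 0)"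

end

theory Submission
  imports Defs
begin

text \<open>Orthogonality is tested against functions \<open>v\<close> with derivative \<open>g\<close> on \<open>(\<alpha>,\<beta>)\<close> that are
  constant on both components of \<open>Q\<^sub>1\<close>: \<open>v = a\<close> on \<open>(0,\<alpha>)\<close> and \<open>v = a + \<integral>\<^sub>\<alpha>\<^sup>\<beta> g\<close> on \<open>(\<beta>,1)\<close>.
  Such a \<open>v\<close> lies in \<open>V(\<theta>)\<close> as soon as \<open>a + \<integral>\<^sub>\<alpha>\<^sup>\<beta> g = exp(2\<pi>i\<theta>) a\<close>. With \<open>a = 0\<close> and
  \<open>g = w' - c\<close>, where \<open>c\<close> is the mean of \<open>w'\<close> on \<open>(\<alpha>,\<beta>)\<close>, orthogonality gives
  \<open>\<integral>\<^sub>\<alpha>\<^sup>\<beta> |w' - c|^2 = 0\<close>, so \<open>w\<close> is affine on \<open>(\<alpha>,\<beta>)\<close>. With \<open>a = 1\<close> and \<open>g\<close> constant it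
  becomes a linear relation between the slope \<open>c\<close> and \<open>\<integral>\<^sub>Q\<^sub>1 w\<close>, which yields (ii) and (iii).\<close>

lemma set_integrable_const_Ioo:
  "set_integrable lborel {a<..<b::real} (\<lambda>_. c::'a::{banach, second_countable_topology})"
proof -
  have "integrable lborel (\<lambda>x. indicator {a<..<b} x :: real)"
    by (cases "a \<le> b") (auto simp: integrable_indicator_iff)
  then show ?thesis unfolding set_integrable_def by (rule integrable_scaleR_left)
qed

lemma set_integrable_cnj:
  "set_integrable M A (f :: _ \<Rightarrow> complex) \<Longrightarrow> set_integrable M A (\<lambda>t. cnj (f t))"
  unfolding set_integrable_def complex_cnj_scaleR[symmetric] by (rule integrable_cnj)

lemma set_integral_cnj: "(LINT t:A|M. cnj (f t)) = cnj (LINT t:A|M. (f t :: complex))"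
  unfolding set_lebesgue_integral_def complex_cnj_scaleR[symmetric]
  by (rule Bochner_Integration.integral_cnj)

lemma set_integrable_complex_of_real:
  "set_integrable M A (f :: _ \<Rightarrow> real) \<Longrightarrow> set_integrable M A (\<lambda>t. complex_of_real (f t))"
proof -
  have "(\<lambda>x. indicator A x *\<^sub>R complex_of_real (f x)) = (\<lambda>x. of_real (indicator A x *\<^sub>R f x))"
    by (simp add: scaleR_conv_of_real)
  then show "set_integrable M A f \<Longrightarrow> ?thesis"
    unfolding set_integrable_def by (metis integrable_of_real)
qed

lemma norm_diff_square_le:
  fixes a b :: "'a::real_normed_vector"
  shows "(norm (a - b))\<^sup>2 \<le> 2 * (norm a)\<^sup>2 + 2 * (norm b)\<^sup>2"
proof -
  have "(norm (a - b))\<^sup>2 \<le> (norm a + norm b)\<^sup>2"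
    by (simp add: norm_triangle_ineq4 power_mono)
  also have "\<dots> \<le> 2 * (norm a)\<^sup>2 + 2 * (norm b)\<^sup>2"
    using zero_le_power2[of "norm a - norm b"] by (simp add: power2_diff power2_sum)
  finally show ?thesis .
qed

lemma set_integrable_norm_square_diff_const:
  fixes f :: "real \<Rightarrow> complex"
  assumes f: "set_integrable lborel {a<..<b} f"
    and f2: "set_integrable lborel {a<..<b} (\<lambda>t. (cmod (f t))\<^sup>2)"
  shows "set_integrable lborel {a<..<b} (\<lambda>t. (cmod (f t - c))\<^sup>2)"
proof (rule set_integrable_bound[where f="\<lambda>t. 2 * (cmod (f t))\<^sup>2 + 2 * (cmod c)\<^sup>2"])
  show "set_integrable lborel {a<..<b} (\<lambda>t. 2 * (cmod (f t))\<^sup>2 + 2 * (cmod c)\<^sup>2)"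
    using f2 set_integrable_const_Ioo by (intro set_integral_add(1)) auto
  have [measurable]: "(\<lambda>t. indicator {a<..<b} t *\<^sub>R (f t - c)) \<in> borel_measurable lborel"
    using set_integral_diff(1)[OF f set_integrable_const_Ioo]
    unfolding set_integrable_def by (rule borel_measurable_integrable)
  have "(\<lambda>t. indicator {a<..<b} t *\<^sub>R (cmod (f t - c))\<^sup>2)
      = (\<lambda>t. (norm (indicator {a<..<b} t *\<^sub>R (f t - c)))\<^sup>2)"
    by (rule ext) (simp split: split_indicator)
  then show "set_borel_measurable lborel {a<..<b} (\<lambda>t. (cmod (f t - c))\<^sup>2)"
    unfolding set_borel_measurable_def by (simp only:) measurable
  show "AE t in lborel. t \<in> {a<..<b} \<longrightarrow>
      norm ((cmod (f t - c))\<^sup>2) \<le> norm (2 * (cmod (f t))\<^sup>2 + 2 * (cmod c)\<^sup>2)"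
    using norm_diff_square_le by (intro AE_I2) auto
qed

lemma AE_eq_0_if_set_integral_norm_square_eq_0:
  fixes g :: "_ \<Rightarrow> 'b::real_normed_vector"
  assumes "set_integrable M A (\<lambda>t. (norm (g t))\<^sup>2)" "(LINT t:A|M. (norm (g t))\<^sup>2) = 0"
  shows "AE t in M. t \<in> A \<longrightarrow> g t = 0"
proof -
  have "AE t in M. indicator A t *\<^sub>R (norm (g t))\<^sup>2 = 0"
    using assms integral_nonneg_eq_0_iff_AE[of M "\<lambda>t. indicator A t *\<^sub>R (norm (g t))\<^sup>2"]
    unfolding set_integrable_def set_lebesgue_integral_def by auto
  then show ?thesis by eventually_elim (auto split: split_indicator)
qed

lemma set_integral_eq_on_subset:
  fixes f g :: "_ \<Rightarrow> 'b::{banach, second_countable_topology}"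
  assumes "A \<subseteq> B" "\<And>t. t \<in> A \<Longrightarrow> f t = g t" "\<And>t. t \<in> B - A \<Longrightarrow> f t = 0"
  shows "(LINT t:B|M. f t) = (LINT t:A|M. g t)"
  unfolding set_lebesgue_integral_def
  by (rule Bochner_Integration.integral_cong) (use assms in \<open>auto split: split_indicator\<close>)

lemma H1_set_integrable:
  "H1 u u' \<Longrightarrow> 0 \<le> a \<Longrightarrow> b \<le> 1 \<Longrightarrow> set_integrable lborel {a<..<b} u'"
  unfolding H1_def by (auto intro: set_integrable_subset)

lemma H1_increment:
  assumes "H1 u u'" "0 \<le> a" "a \<le> b" "b \<le> 1"
  shows "u b - u a = (LINT t:{a<..<b}|lborel. u' t)"
proof -
  have u: "u x = u 0 + interval_lebesgue_integral lborel (ereal 0) (ereal x) u'" if "0 \<le> x" "x \<le> 1" for x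
  proof -
    have "\<forall>x\<in>{0..1}. u x = u 0 + (LINT t:{0..x}|lborel. u' t)"
      using assms(1) unfolding H1_def by blast
    then have "u x = u 0 + (LINT t:{0..x}|lborel. u' t)"
      by (rule bspec) (use that in auto)
    with that show ?thesis by (simp add: interval_integral_Icc)
  qed
  have "interval_lebesgue_integrable lborel (ereal 0) (ereal b) u'"
    using H1_set_integrable[OF assms(1) order_refl assms(4)] assms
    by (simp add: interval_lebesgue_integrable_def)
  then have "interval_lebesgue_integral lborel (ereal 0) (ereal a) u' + interval_lebesgue_integral lborel a b u'
      = interval_lebesgue_integral lborel (ereal 0) (ereal b) u'"
    using assms by (intro interval_integral_sum) (simp_all add: min_def max_def)
  moreover have "interval_lebesgue_integral lborel a b u' = (LINT t:{a<..<b}|lborel. u' t)"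
    using assms by (simp add: interval_lebesgue_integral_def)
  ultimately show ?thesis using u[of a] u[of b] assms by (simp add: algebra_simps)
qed

definition antideriv_on :: "real \<Rightarrow> real \<Rightarrow> complex \<Rightarrow> (real \<Rightarrow> complex) \<Rightarrow> real \<Rightarrow> complex" where
  "antideriv_on \<alpha> \<beta> a g x = a + (LINT t:{0..x}|lborel. indicator {\<alpha><..<\<beta>} t * g t)"

lemma antideriv_on_below: "x \<le> \<alpha> \<Longrightarrow> antideriv_on \<alpha> \<beta> a g x = a"
  unfolding antideriv_on_def
  by (subst set_lebesgue_integral_cong[where g="\<lambda>_. 0"]) auto

lemma antideriv_on_above:
  assumes "0 \<le> \<alpha>" "\<beta> \<le> x"
  shows "antideriv_on \<alpha> \<beta> a g x = a + (LINT t:{\<alpha><..<\<beta>}|lborel. g t)"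
  unfolding antideriv_on_def using assms by (subst set_integral_eq_on_subset[of "{\<alpha><..<\<beta>}"]) auto

lemma H1_antideriv_on:
  assumes "0 \<le> \<alpha>" "\<beta> \<le> 1"
    and g: "set_integrable lborel {\<alpha><..<\<beta>} g"
    and g2: "set_integrable lborel {\<alpha><..<\<beta>} (\<lambda>t. (cmod (g t))\<^sup>2)"
  shows "H1 (antideriv_on \<alpha> \<beta> a g) (\<lambda>t. indicator {\<alpha><..<\<beta>} t * g t)"
proof -
  have "(\<lambda>t. indicator {0<..<1} t *\<^sub>R (indicator {\<alpha><..<\<beta>} t * g t)) = (\<lambda>t. indicator {\<alpha><..<\<beta>} t *\<^sub>R g t)"
    using assms(1,2) by (intro ext) (auto split: split_indicator)
  moreover have "(\<lambda>t. indicator {0<..<1} t *\<^sub>R (cmod (indicator {\<alpha><..<\<beta>} t * g t))\<^sup>2)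
      = (\<lambda>t. indicator {\<alpha><..<\<beta>} t *\<^sub>R (cmod (g t))\<^sup>2)"
    using assms(1,2) by (intro ext) (auto simp: norm_mult split: split_indicator)
  ultimately show ?thesis
    using g g2 antideriv_on_below[OF assms(1), of \<beta> a g]
    unfolding H1_def set_borel_measurable_def set_integrable_def
    by (auto simp: antideriv_on_def intro: borel_measurable_integrable)
qed

lemma inV_antideriv_on:
  assumes "0 \<le> \<alpha>" "\<beta> \<le> 1"
    and "set_integrable lborel {\<alpha><..<\<beta>} g"
    and "set_integrable lborel {\<alpha><..<\<beta>} (\<lambda>t. (cmod (g t))\<^sup>2)"
    and "a + (LINT t:{\<alpha><..<\<beta>}|lborel. g t) = exp (\<i> * complex_of_real (2 * pi * \<theta>)) * a"
  shows "inV p \<alpha> \<beta> \<theta> (antideriv_on \<alpha> \<beta> a g) (\<lambda>t. indicator {\<alpha><..<\<beta>} t * g t)"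
  unfolding inV_def H1_theta_def
proof (intro conjI)
  show "H1 (antideriv_on \<alpha> \<beta> a g) (\<lambda>t. indicator {\<alpha><..<\<beta>} t * g t)"
    using assms(1-4) by (rule H1_antideriv_on)
  show "antideriv_on \<alpha> \<beta> a g 1 = exp (\<i> * complex_of_real (2 * pi * \<theta>)) * antideriv_on \<alpha> \<beta> a g 0"
    using assms antideriv_on_below[of 0 \<alpha>] antideriv_on_above[of \<alpha> \<beta> 1] by simp
  show "AE x in lborel. x \<in> Q1 \<alpha> \<beta> \<longrightarrow>
      complex_of_real (p x) * (indicator {\<alpha><..<\<beta>} x * g x) = 0"
    by (intro AE_I2) (auto simp: Q1_def)
qed

lemma set_integral_Q1_step:
  fixes v :: "real \<Rightarrow> complex"
  assumes "0 \<le> \<alpha>" "\<alpha> \<le> \<beta>" "\<beta> \<le> 1"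
    and below: "\<And>x. x \<le> \<alpha> \<Longrightarrow> v x = a" and above: "\<And>x. \<beta> \<le> x \<Longrightarrow> v x = b"
  shows "(LINT x:Q1 \<alpha> \<beta>|lborel. v x) = complex_of_real \<alpha> * a + complex_of_real (1 - \<beta>) * b"
proof -
  have "(LINT x:{0<..<\<alpha>}|lborel. v x) = (LINT x:{0<..<\<alpha>}|lborel. a)"
    and "set_integrable lborel {0<..<\<alpha>} v"
    using set_integrable_const_Ioo[of 0 \<alpha> a] below set_integrable_cong[of lborel lborel "{0<..<\<alpha>}" _ v "\<lambda>_. a"]
    by (auto intro: set_lebesgue_integral_cong)
  moreover have "(LINT x:{\<beta><..<1}|lborel. v x) = (LINT x:{\<beta><..<1}|lborel. b)"
    and "set_integrable lborel {\<beta><..<1} v"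
    using set_integrable_const_Ioo[of \<beta> 1 b] above set_integrable_cong[of lborel lborel "{\<beta><..<1}" _ v "\<lambda>_. b"]
    by (auto intro: set_lebesgue_integral_cong)
  ultimately have "(LINT x:Q1 \<alpha> \<beta>|lborel. v x)
      = (LINT x:{0<..<\<alpha>}|lborel. a) + (LINT x:{\<beta><..<1}|lborel. b)"
    unfolding Q1_def using assms(2) by (subst set_integral_Un) auto
  then show ?thesis using assms by (simp add: set_integral_const scaleR_conv_of_real)
qed

lemma inVperp_orthogonal_antideriv_on:
  assumes w: "inVperp p \<alpha> \<beta> \<theta> w w'"
    and "0 \<le> \<alpha>" "\<alpha> \<le> \<beta>" "\<beta> \<le> 1"
    and "set_integrable lborel {\<alpha><..<\<beta>} g"
    and "set_integrable lborel {\<alpha><..<\<beta>} (\<lambda>t. (cmod (g t))\<^sup>2)"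
    and "a + (LINT t:{\<alpha><..<\<beta>}|lborel. g t) = exp (\<i> * complex_of_real (2 * pi * \<theta>)) * a"
  shows "(LINT y:Q1 \<alpha> \<beta>|lborel. w y)
      * cnj (complex_of_real \<alpha> * a + complex_of_real (1 - \<beta>) * (a + (LINT t:{\<alpha><..<\<beta>}|lborel. g t)))
    + (LINT t:{\<alpha><..<\<beta>}|lborel. w' t * cnj (g t)) = 0"
proof -
  let ?v = "antideriv_on \<alpha> \<beta> a g" and ?v' = "\<lambda>t. indicator {\<alpha><..<\<beta>} t * g t"
  have "ip \<alpha> \<beta> w w' ?v ?v' = 0"
    using w inV_antideriv_on[of \<alpha> \<beta> g a \<theta> p] assms(2-) unfolding inVperp_def by blast
  moreover have "(LINT y:Q1 \<alpha> \<beta>|lborel. ?v y)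
      = complex_of_real \<alpha> * a + complex_of_real (1 - \<beta>) * (a + (LINT t:{\<alpha><..<\<beta>}|lborel. g t))"
    using assms(2-4) antideriv_on_below antideriv_on_above by (intro set_integral_Q1_step) auto
  moreover have "(LINT t:{0<..<1}|lborel. w' t * cnj (?v' t)) = (LINT t:{\<alpha><..<\<beta>}|lborel. w' t * cnj (g t))"
    using assms(2,4) by (intro set_integral_eq_on_subset) auto
  ultimately show ?thesis unfolding ip_def by simp
qed

lemma inVperp_derivative_const:
  assumes w: "inVperp p \<alpha> \<beta> \<theta> w w'" and "0 \<le> \<alpha>" "\<alpha> < \<beta>" "\<beta> \<le> 1"
  shows "AE y in lborel. y \<in> {\<alpha><..<\<beta>} \<longrightarrow> w' y = (w \<beta> - w \<alpha>) / complex_of_real (\<beta> - \<alpha>)"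
proof -
  define c where "c = (w \<beta> - w \<alpha>) / complex_of_real (\<beta> - \<alpha>)"
  define g where "g t = w' t - c" for t
  have H: "H1 w w'" using w unfolding inVperp_def H1_theta_def by blast
  have w'_int: "set_integrable lborel {\<alpha><..<\<beta>} w'"
    using H1_set_integrable[OF H] assms(2,4) .
  have "set_integrable lborel {\<alpha><..<\<beta>} (\<lambda>t. (cmod (w' t))\<^sup>2)"
    using H assms(2,4) unfolding H1_def by (auto intro: set_integrable_subset)
  then have g2_int: "set_integrable lborel {\<alpha><..<\<beta>} (\<lambda>t. (cmod (g t))\<^sup>2)"
    unfolding g_def using w'_int by (rule set_integrable_norm_square_diff_const[rotated])
  have g_int: "set_integrable lborel {\<alpha><..<\<beta>} g"
    unfolding g_def using w'_int set_integrable_const_Ioo by (rule set_integral_diff(1))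
  have "(LINT t:{\<alpha><..<\<beta>}|lborel. w' t) = complex_of_real (\<beta> - \<alpha>) * c"
    using H1_increment[OF H] assms(2-4) by (simp add: c_def)
  then have g_mean: "(LINT t:{\<alpha><..<\<beta>}|lborel. g t) = 0"
    unfolding g_def using assms(3)
    by (simp add: set_integral_diff(2)[OF w'_int set_integrable_const_Ioo] set_integral_const
        scaleR_conv_of_real)
  have w'_g: "(LINT t:{\<alpha><..<\<beta>}|lborel. w' t * cnj (g t)) = 0"
    using inVperp_orthogonal_antideriv_on[OF w assms(2) less_imp_le[OF assms(3)] assms(4) g_int g2_int,
        where a=0] g_mean by simp
  have "(\<lambda>t. w' t * cnj (g t)) = (\<lambda>t. complex_of_real ((cmod (g t))\<^sup>2) + c * cnj (g t))"
    by (simp only: complex_norm_square g_def) (simp add: algebra_simps)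
  then have "(LINT t:{\<alpha><..<\<beta>}|lborel. w' t * cnj (g t))
      = complex_of_real (LINT t:{\<alpha><..<\<beta>}|lborel. (cmod (g t))\<^sup>2)
        + c * cnj (LINT t:{\<alpha><..<\<beta>}|lborel. g t)"
    using set_integrable_complex_of_real[OF g2_int] set_integrable_cnj[OF g_int]
    by (simp add: set_integral_add(2) set_integral_complex_of_real set_integral_cnj del: of_real_power)
  then have "(LINT t:{\<alpha><..<\<beta>}|lborel. (cmod (g t))\<^sup>2) = 0"
    using w'_g g_mean by simp
  then have "AE t in lborel. t \<in> {\<alpha><..<\<beta>} \<longrightarrow> g t = 0"
    by (rule AE_eq_0_if_set_integral_norm_square_eq_0[OF g2_int])
  then show ?thesis unfolding c_def[symmetric] g_def by eventually_elim simp
qed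

lemma inVperp_affine:
  assumes w: "inVperp p \<alpha> \<beta> \<theta> w w'" and "0 \<le> \<alpha>" "\<alpha> < \<beta>" "\<beta> \<le> 1"
    and y: "y \<in> {\<alpha><..<\<beta>}"
  shows "w y = (w \<beta> - w \<alpha>) / complex_of_real (\<beta> - \<alpha>) * complex_of_real (y - \<alpha>) + w \<alpha>"
proof -
  define c where "c = (w \<beta> - w \<alpha>) / complex_of_real (\<beta> - \<alpha>)"
  have H: "H1 w w'" using w unfolding inVperp_def H1_theta_def by blast
  have "set_integrable lborel {\<alpha><..<y} w'"
    using H1_set_integrable[OF H] assms(2,4) y by simp
  then have [measurable]: "(\<lambda>t. indicator {\<alpha><..<y} t *\<^sub>R w' t) \<in> borel_measurable lborel"
    unfolding set_integrable_def by (rule borel_measurable_integrable)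
  have "w y - w \<alpha> = (LINT t:{\<alpha><..<y}|lborel. w' t)"
    using H1_increment[OF H] assms(2,4) y by simp
  also have "\<dots> = (LINT t:{\<alpha><..<y}|lborel. c)"
    unfolding set_lebesgue_integral_def
    using inVperp_derivative_const[OF assms(1-4)] y
    by (intro integral_cong_AE) (auto simp: c_def split: split_indicator elim!: eventually_mono)
  also have "\<dots> = complex_of_real (y - \<alpha>) * c"
    using y by (simp add: set_integral_const scaleR_conv_of_real)
  finally show ?thesis by (simp add: c_def algebra_simps)
qed

lemma exp_neg_two_pi_i_neq_1:
  assumes "0 < \<theta>" "\<theta> < 1"
  shows "exp (- \<i> * complex_of_real (2 * pi * \<theta>)) \<noteq> 1"
proof
  assume "exp (- \<i> * complex_of_real (2 * pi * \<theta>)) = 1"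
  then obtain n :: int where "Im (- \<i> * complex_of_real (2 * pi * \<theta>)) = of_int (2 * n) * pi"
    unfolding exp_eq_1 by blast
  then have "pi * (\<theta> + of_int n) = 0" by (simp add: algebra_simps)
  then have "\<theta> = - of_int n" by simp
  then have "- 1 < n" "n < 0" using assms by linarith+
  then show False by simp
qed

lemma inVperp_slope_Q1_integral:
  assumes w: "inVperp p \<alpha> \<beta> \<theta> w w'" and "0 \<le> \<alpha>" "\<alpha> < \<beta>" "\<beta> \<le> 1"
  defines "e \<equiv> exp (- \<i> * complex_of_real (2 * pi * \<theta>))"
  shows "(w \<beta> - w \<alpha>) / complex_of_real (\<beta> - \<alpha>) * (1 - e)
    = (complex_of_real \<alpha> + complex_of_real (1 - \<beta>) * e) * (LINT y:Q1 \<alpha> \<beta>|lborel. w y)"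
proof -
  define d where "d = (cnj e - 1) / complex_of_real (\<beta> - \<alpha>)"
  have H: "H1 w w'" using w unfolding inVperp_def H1_theta_def by blast
  have cnj_e: "cnj e = exp (\<i> * complex_of_real (2 * pi * \<theta>))"
    unfolding e_def by (simp add: exp_cnj)
  have d_int: "(LINT t:{\<alpha><..<\<beta>}|lborel. d) = cnj e - 1"
    using assms(3) by (simp add: set_integral_const scaleR_conv_of_real d_def)
  have "(LINT y:Q1 \<alpha> \<beta>|lborel. w y) * cnj (complex_of_real \<alpha> * 1 + complex_of_real (1 - \<beta>) * (1 + (cnj e - 1)))
      + (LINT t:{\<alpha><..<\<beta>}|lborel. w' t * cnj d) = 0"
    using inVperp_orthogonal_antideriv_on[OF w assms(2) less_imp_le[OF assms(3)] assms(4)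
        set_integrable_const_Ioo set_integrable_const_Ioo, of 1 d]
    by (simp only: d_int cnj_e) simp
  moreover have "(LINT t:{\<alpha><..<\<beta>}|lborel. w' t) = w \<beta> - w \<alpha>"
    using H1_increment[OF H] assms(2-4) by simp
  moreover have "cnj d = (e - 1) / complex_of_real (\<beta> - \<alpha>)"
    unfolding d_def by simp
  ultimately have "(LINT y:Q1 \<alpha> \<beta>|lborel. w y) * (complex_of_real \<alpha> + complex_of_real (1 - \<beta>) * e)
      + (w \<beta> - w \<alpha>) * ((e - 1) / complex_of_real (\<beta> - \<alpha>)) = 0"
    by simp
  moreover have "(w \<beta> - w \<alpha>) / complex_of_real (\<beta> - \<alpha>) * (1 - e)
      = - ((w \<beta> - w \<alpha>) * ((e - 1) / complex_of_real (\<beta> - \<alpha>)))"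
    by (simp add: divide_inverse algebra_simps)
  ultimately show ?thesis
    by (metis add_eq_0_iff minus_minus mult.commute)
qed

theorem lemma3p4:
  fixes p :: "real \<Rightarrow> real" and \<alpha> \<beta> \<theta> :: real and w w' :: "real \<Rightarrow> complex"
  assumes p_meas: "p \<in> borel_measurable lborel"
    and p_per: "\<forall>x. p (x + 1) = p x"
    and p_pos: "\<forall>x. p x > 0"
    and p_bdd: "\<exists>M. AE x in lborel. x \<in> {0<..<1} \<longrightarrow> p x \<le> M \<and> 1 / p x \<le> M"
    and "0 < \<alpha>" and "\<alpha> < \<beta>" and "\<beta> < 1"
    and "0 \<le> \<theta>" and "\<theta> < 1"
    and w: "inVperp p \<alpha> \<beta> \<theta> w w'"
  shows "(\<exists>c. AE y in lborel. y \<in> {\<alpha><..<\<beta>} \<longrightarrow> w' y = c)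
     \<and> (\<forall>y\<in>{\<alpha><..<\<beta>}. w y = (w \<beta> - w \<alpha>) / complex_of_real (\<beta> - \<alpha>) * complex_of_real (y - \<alpha>) + w \<alpha>)
     \<and> (\<theta> \<noteq> 0 \<longrightarrow>
          (w \<beta> - w \<alpha>) / complex_of_real (\<beta> - \<alpha>) =
            inverse (1 - exp (- \<i> * complex_of_real (2 * pi * \<theta>)))
            * (complex_of_real \<alpha> + complex_of_real (1 - \<beta>) * exp (- \<i> * complex_of_real (2 * pi * \<theta>)))
            * (LINT y:Q1 \<alpha> \<beta>|lborel. w y))
     \<and> (\<theta> = 0 \<longrightarrow> (LINT y:Q1 \<alpha> \<beta>|lborel. w y) = 0)"
proof -
  have ab: "0 \<le> \<alpha>" "\<alpha> < \<beta>" "\<beta> \<le> 1" using assms by auto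
  define e where "e = exp (- \<i> * complex_of_real (2 * pi * \<theta>))"
  define Y where "Y = complex_of_real \<alpha> + complex_of_real (1 - \<beta>) * e"
  have slope: "(w \<beta> - w \<alpha>) / complex_of_real (\<beta> - \<alpha>) * (1 - e) = Y * (LINT y:Q1 \<alpha> \<beta>|lborel. w y)"
    using inVperp_slope_Q1_integral[OF w ab] unfolding e_def Y_def .
  have "(w \<beta> - w \<alpha>) / complex_of_real (\<beta> - \<alpha>) = inverse (1 - e) * Y * (LINT y:Q1 \<alpha> \<beta>|lborel. w y)"
    if "\<theta> \<noteq> 0"
  proof -
    have "1 - e \<noteq> 0"
      using exp_neg_two_pi_i_neq_1[of \<theta>] that assms(8,9) unfolding e_def by auto
    with slope show ?thesis by (simp add: field_simps)
  qed
  moreover have "(LINT y:Q1 \<alpha> \<beta>|lborel. w y) = 0" if "\<theta> = 0"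
  proof -
    have "Re Y = \<alpha> + (1 - \<beta>)" using that unfolding Y_def e_def by simp
    then have "Y \<noteq> 0" using assms(5,7) by auto
    then show ?thesis using slope that unfolding e_def by simp
  qed
  ultimately show ?thesis
    using inVperp_derivative_const[OF w ab] inVperp_affine[OF w ab] unfolding e_def Y_def by blast
qed

end
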